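(* Let $\mathcal{T}$ be a finite forest of binary decision trees over $\mathbb{R}^d$, $b\ge 0$ an integer, and $\mathcal{D}$ a finite nonempty multiset of labelled instances $(\vec{x},y)\in\mathbb{R}^d\times\{-1,+1\}$. Then $$FLB(A_b,\mathcal{D})\ \le\ ELB(A_b,\mathcal{D})\ \le\ Acc_{A_b}(\mathcal{D}),$$ i.e., both quantities defined below are lower bounds on the accuracy of $\mathcal{T}$ under the attacker $A_b$.
   Context: Decision trees: a tree is either a leaf $\lambda(\hat y)$, $\hat y\in\{-1,+1\}$, or an internal node $\sigma(f,v,t_l,t_r)$ (feature $f$, threshold $v\in\mathbb{R}$, subtrees $t_l,t_r$); input $\vec{x}$ goes to $t_l$ if $x_f\le v$, else to $t_r$; $t(\vec{x})$ is the label of the leaf reached, and the traversal path of $\vec{x}$ in $t$ is the sequence of internal nodes visited. Forest prediction: $\mathcal{T}(\vec{x})=+1$ if $\sum_{t\in\mathcal{T}}t(\vec{x})>0$, else $-1$. Attacker: $A_b(\vec{x})=\{\vec{x}'\in\mathbb{R}^d:\|\vec{x}-\vec{x}'\|_0\le b\}$. Accuracy under attack: let $E=\{(\vec{x},y)\in\mathcal{D}: y\,\mathcal{T}(\vec{x})<0\}$, $E'=\{(\vec{x},y)\in\mathcal{D}\setminus E:\exists\vec{x}'\in A_b(\vec{x}),\ y\,\mathcal{T}(\vec{x}')<0\}$, and $Acc_{A_b}(\mathcal{D})=\frac{|\mathcal{D}|-|E\cup E'|}{|\mathcal{D}|}$. Covering sets: for $(\vec{x},y)\in\mathcal{D}$,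 let $\omega(\vec{x},y)=|\{t\in\mathcal{T}:t(\vec{x})\neq y\}|$. For each feature $f$, let $S_f^+$ (resp. $S_f^-$) be the set of trees $t\in\mathcal{T}$ with $t(\vec{x})=y$ whose traversal path of $\vec{x}$ contains a node $\sigma(f,v,\cdot,\cdot)$ with $x_f\le v$ true (resp. false). Call a collection $S'$ of these sets admissible if $|S'|\le b$ and for no $f$ does $S'$ contain both $S_f^+$ and $S_f^-$. FLB: $\overline{S_{FLB}}(\vec{x},y)=\max_{S' \text{ admissible}}\sum_{S_i\in S'}|S_i|$ (equivalently, the sum of sizes of the $b$ largest sets chosen greedily by size, never taking both $S_f^+$ and $S_f^-$ for the same $f$). ELB: $\overline{S_{ELB}}(\vec{x},y)=\max_{S'\text{ admissible}}\big|\bigcup_{S_i\in S'}S_i\big|$. For $X\in\{FLB,ELB\}$ let $E_X=\{(\vec{x},y)\in\mathcal{D}\setminus E:\ \omega(\vec{x},y)+\overline{S_X}(\vec{x},y)\ge|\mathcal{T}|/2\}$ and $X(A_b,\mathcal{D})=\frac{|\mathcal{D}|-|E\cup E_X|}{|\mathcal{D}|}$. *)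

theory Defs
  imports "HOL-Analysis.Analysis" "HOL-Library.Multiset"
begin

datatype 'd dtree = Leaf int | Node 'd real "'d dtree" "'d dtree"

fun leaves_ok :: "'d dtree \<Rightarrow> bool" where
  "leaves_ok (Leaf y) \<longleftrightarrow> y \<in> {-1, 1}"
| "leaves_ok (Node f v l r) \<longleftrightarrow> leaves_ok l \<and> leaves_ok r"

fun tree_pred :: "'d dtree \<Rightarrow> real^'d \<Rightarrow> int" where
  "tree_pred (Leaf y) x = y"
| "tree_pred (Node f v l r) x = (if x $ f \<le> v then tree_pred l x else tree_pred r x)"

fun tree_path :: "'d dtree \<Rightarrow> real^'d \<Rightarrow> ('d \<times> real) list" where
  "tree_path (Leaf y) x = []"
| "tree_path (Node f v l r) x =
     (f, v) # (if x $ f \<le> v then tree_path l x else tree_path r x)"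

text \<open>A forest is a list of trees (duplicates allowed); trees are referred to by index.\<close>
definition forest_pred :: "'d dtree list \<Rightarrow> real^'d \<Rightarrow> int" where
  "forest_pred T x = (if (\<Sum>i<length T. tree_pred (T ! i) x) > 0 then 1 else -1)"

definition attacker :: "nat \<Rightarrow> real^'d \<Rightarrow> (real^'d) set" where
  "attacker b x = {x'. card {f. x $ f \<noteq> x' $ f} \<le> b}"

definition err_set :: "'d dtree list \<Rightarrow> ((real^'d) \<times> int) \<Rightarrow> bool" where
  "err_set T p = (snd p * forest_pred T (fst p) < 0)"

definition attack_set :: "'d dtree list \<Rightarrow> nat \<Rightarrow> ((real^'d) \<times> int) \<Rightarrow> bool" where
  "attack_set T b p = (\<not> err_set T p \<and>
      (\<exists>x'\<in>attacker b (fst p). snd p * forest_pred T x' < 0))"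

definition acc_attack :: "'d dtree list \<Rightarrow> nat \<Rightarrow> ((real^'d) \<times> int) multiset \<Rightarrow> real" where
  "acc_attack T b D =
     (real (size D) - real (size (filter_mset (\<lambda>p. err_set T p \<or> attack_set T b p) D)))
       / real (size D)"

definition omega :: "'d dtree list \<Rightarrow> real^'d \<Rightarrow> int \<Rightarrow> nat" where
  "omega T x y = card {i. i < length T \<and> tree_pred (T ! i) x \<noteq> y}"

text \<open>Covering sets: cover_set T x y (f, True) = S_f^+, cover_set T x y (f, False) = S_f^-
  (as sets of tree indices).\<close>
definition cover_set :: "'d dtree list \<Rightarrow> real^'d \<Rightarrow> int \<Rightarrow> 'd \<times> bool \<Rightarrow> nat set" where
  "cover_set T x y k = {i. i < length T \<and> tree_pred (T ! i) x = y \<and>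
      (\<exists>v. (fst k, v) \<in> set (tree_path (T ! i) x) \<and> (x $ fst k \<le> v) = snd k)}"

text \<open>Admissible collections, given by their index sets.\<close>
definition admissible :: "nat \<Rightarrow> ('d \<times> bool) set \<Rightarrow> bool" where
  "admissible b K = (card K \<le> b \<and> \<not> (\<exists>f. (f, True) \<in> K \<and> (f, False) \<in> K))"

definition S_FLB :: "'d::finite dtree list \<Rightarrow> nat \<Rightarrow> real^'d \<Rightarrow> int \<Rightarrow> nat" where
  "S_FLB T b x y = Max {\<Sum>k\<in>K. card (cover_set T x y k) | K. admissible b K}"

definition S_ELB :: "'d::finite dtree list \<Rightarrow> nat \<Rightarrow> real^'d \<Rightarrow> int \<Rightarrow> nat" where
  "S_ELB T b x y = Max {card (\<Union>k\<in>K. cover_set T x y k) | K. admissible b K}"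

definition bound_acc ::
  "('d::finite dtree list \<Rightarrow> nat \<Rightarrow> real^'d \<Rightarrow> int \<Rightarrow> nat) \<Rightarrow>
   'd dtree list \<Rightarrow> nat \<Rightarrow> ((real^'d) \<times> int) multiset \<Rightarrow> real" where
  "bound_acc S T b D =
     (real (size D) - real (size (filter_mset (\<lambda>(x, y). err_set T (x, y) \<or>
        (\<not> err_set T (x, y) \<and>
         real (omega T x y) + real (S T b x y) \<ge> real (length T) / 2)) D)))
       / real (size D)"

definition FLB :: "'d::finite dtree list \<Rightarrow> nat \<Rightarrow> ((real^'d) \<times> int) multiset \<Rightarrow> real" where
  "FLB T b D = bound_acc S_FLB T b D"

definition ELB :: "'d::finite dtree list \<Rightarrow> nat \<Rightarrow> ((real^'d) \<times> int) multiset \<Rightarrow> real" where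
  "ELB T b D = bound_acc S_ELB T b D"

end

theory Submission
  imports Defs
begin

text \<open>A tree can change its vote between \<open>x\<close> and an attacked point \<open>x'\<close> only if its
  path for \<open>x\<close> tests a perturbed feature \<open>f\<close>, and then it lies in the covering set of \<open>f\<close>
  oriented by the sign of \<open>x'\<^sub>f - x\<^sub>f\<close>. The at most \<open>b\<close> perturbed features, each with
  one orientation, form an admissible collection, so the trees wrong on \<open>x'\<close> number at most
  \<open>\<omega> + S\<^sub>E\<^sub>L\<^sub>B\<close>; a successful attack needs at least half the forest wrong. Since a union is
  no larger than the sum of its parts, \<open>S\<^sub>E\<^sub>L\<^sub>B \<le> S\<^sub>F\<^sub>L\<^sub>B\<close>, and both bounds follow by
  comparing which instances each criterion discards.\<close>

lemma leaves_ok_tree_pred: "leaves_ok t \<Longrightarrow> tree_pred t x \<in> {-1, 1}"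
  by (induction t) auto

lemma tree_pred_differs_on_path:
  assumes "tree_pred t x \<noteq> tree_pred t x'"
  shows "\<exists>f v. (f, v) \<in> set (tree_path t x) \<and> (x $ f \<le> v) \<noteq> (x' $ f \<le> v)"
  using assms by (induction t) (auto split: if_splits)

lemma sum_signs_eq_agreements_minus_disagreements:
  fixes p :: "nat \<Rightarrow> int"
  assumes "\<And>i. i < n \<Longrightarrow> p i \<in> {-1, 1}" and "y \<in> {-1, 1}"
  shows "y * (\<Sum>i<n. p i) = int n - 2 * int (card {i. i < n \<and> p i \<noteq> y})"
  using assms(1)
proof (induction n)
  case 0
  then show ?case by simp
next
  case (Suc n)
  have split: "{i. i < Suc n \<and> p i \<noteq> y} = {i. i < n \<and> p i \<noteq> y} \<union> (if p n \<noteq> y then {n} else {})"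
    by (auto simp: less_Suc_eq)
  have "p n \<in> {-1, 1}" using Suc.prems by simp
  then have "y * p n = (if p n \<noteq> y then -1 else 1)" using assms(2) by auto
  with Suc show ?case
    by (simp add: split distrib_left card_insert_if)
qed

lemma forest_pred_wrong_sum_nonpos:
  assumes "y \<in> {-1, 1}" and "y * forest_pred T x < 0"
  shows "y * (\<Sum>i<length T. tree_pred (T ! i) x) \<le> 0"
  using assms by (auto simp: forest_pred_def zero_less_mult_iff mult_less_0_iff split: if_splits)

lemma forest_wrong_half_trees_wrong:
  assumes "\<forall>t\<in>set T. leaves_ok t" and "y \<in> {-1, 1}" and "y * forest_pred T x < 0"
  shows "real (length T) / 2 \<le> real (card {i. i < length T \<and> tree_pred (T ! i) x \<noteq> y})"
proof -
  have "\<And>i. i < length T \<Longrightarrow> tree_pred (T ! i) x \<in> {-1, 1}"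
    using assms(1) leaves_ok_tree_pred nth_mem by blast
  from sum_signs_eq_agreements_minus_disagreements[of "length T" "\<lambda>i. tree_pred (T ! i) x", OF this assms(2)]
    forest_pred_wrong_sum_nonpos[OF assms(2,3)]
  show ?thesis by linarith
qed

definition attack_directions :: "real^'d \<Rightarrow> real^'d \<Rightarrow> ('d \<times> bool) set" where
  "attack_directions x x' = (\<lambda>f. (f, x $ f < x' $ f)) ` {f. x $ f \<noteq> x' $ f}"

lemma admissible_attack_directions:
  assumes "x' \<in> attacker b x"
  shows "admissible b (attack_directions x x')"
proof -
  have "card (attack_directions x x') \<le> card {f. x $ f \<noteq> x' $ f}"
    unfolding attack_directions_def by (rule card_image_le) simp
  also have "\<dots> \<le> b" using assms unfolding attacker_def by simp
  finally show ?thesis unfolding admissible_def attack_directions_def by auto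
qed

lemma flipped_tree_in_cover_set:
  assumes "i < length T" and "tree_pred (T ! i) x = y" and "tree_pred (T ! i) x' \<noteq> y"
  shows "i \<in> (\<Union>k\<in>attack_directions x x'. cover_set T x y k)"
proof -
  obtain f v where fv: "(f, v) \<in> set (tree_path (T ! i) x)" "(x $ f \<le> v) \<noteq> (x' $ f \<le> v)"
    using tree_pred_differs_on_path assms(2,3) by metis
  then have "(x $ f \<le> v) = (x $ f < x' $ f)" by auto
  with fv assms have "i \<in> cover_set T x y (f, x $ f < x' $ f)"
    unfolding cover_set_def by auto
  moreover have "(f, x $ f < x' $ f) \<in> attack_directions x x'"
    using fv(2) unfolding attack_directions_def by auto
  ultimately show ?thesis by blast
qed

lemma Max_admissible_ge:
  fixes g :: "('d::finite \<times> bool) set \<Rightarrow> nat"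
  assumes "admissible b K"
  shows "g K \<le> Max {g K | K. admissible b K}"
  using assms by (intro Max_ge finite_image_set) auto

lemma S_ELB_le_S_FLB: "S_ELB T b x y \<le> S_FLB T b x y"
  unfolding S_ELB_def
proof (rule Max.boundedI)
  show "finite {card (\<Union>k\<in>K. cover_set T x y k) | K. admissible b K}"
    by (rule finite_image_set) simp
  have "admissible b {}"
    by (simp add: admissible_def)
  then show "{card (\<Union>k\<in>K. cover_set T x y k) | K. admissible b K} \<noteq> {}"
    by blast
next
  fix n
  assume "n \<in> {card (\<Union>k\<in>K. cover_set T x y k) | K. admissible b K}"
  then obtain K where n: "n = card (\<Union>k\<in>K. cover_set T x y k)" and K: "admissible b K"
    by blast
  have "card (\<Union>k\<in>K. cover_set T x y k) \<le> (\<Sum>k\<in>K. card (cover_set T x y k))"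
    by (rule card_UN_le) simp
  also have "\<dots> \<le> S_FLB T b x y"
    unfolding S_FLB_def using K by (rule Max_admissible_ge)
  finally show "n \<le> S_FLB T b x y"
    unfolding n .
qed

lemma successful_attack_reaches_ELB_threshold:
  fixes T :: "'d::finite dtree list"
  assumes "\<forall>t\<in>set T. leaves_ok t" and "y \<in> {-1, 1}"
    and "x' \<in> attacker b x" and "y * forest_pred T x' < 0"
  shows "real (length T) / 2 \<le> real (omega T x y) + real (S_ELB T b x y)"
proof -
  let ?wrong = "\<lambda>z. {i. i < length T \<and> tree_pred (T ! i) z \<noteq> y}"
  let ?cover = "\<Union>k\<in>attack_directions x x'. cover_set T x y k"
  have "?wrong x' \<subseteq> ?wrong x \<union> ?cover"
    using flipped_tree_in_cover_set by blast
  then have "card (?wrong x') \<le> card (?wrong x \<union> ?cover)"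
    by (intro card_mono) (auto simp: cover_set_def)
  also have "\<dots> \<le> omega T x y + card ?cover"
    unfolding omega_def by (rule card_Un_le)
  also have "card ?cover \<le> S_ELB T b x y"
    unfolding S_ELB_def using admissible_attack_directions[OF assms(3)] by (rule Max_admissible_ge)
  finally show ?thesis
    using forest_wrong_half_trees_wrong[OF assms(1,2,4)] by linarith
qed

lemma accuracy_antimono:
  assumes "\<And>p. p \<in># D \<Longrightarrow> P p \<Longrightarrow> Q p"
  shows "(real (size D) - real (size (filter_mset Q D))) / real (size D)
       \<le> (real (size D) - real (size (filter_mset P D))) / real (size D)"
proof -
  have "size (filter_mset P D) \<le> size (filter_mset Q D)"
    using assms by (intro size_mset_mono filter_mset_mono_strong) auto
  then show ?thesis by (intro divide_right_mono) auto
qed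

lemma bound_acc_antimono:
  assumes "\<And>x y. S T b x y \<le> S' T b x y"
  shows "bound_acc S' T b D \<le> bound_acc S T b D"
  unfolding bound_acc_def
proof (rule accuracy_antimono, clarify)
  fix x y
  assume "real (length T) / 2 \<le> real (omega T x y) + real (S T b x y)"
  then show "real (length T) / 2 \<le> real (omega T x y) + real (S' T b x y)"
    using assms[of x y] by linarith
qed

lemma ELB_le_acc_attack:
  assumes "\<forall>t\<in>set T. leaves_ok t" and "\<forall>p\<in>#D. snd p \<in> {-1, 1}"
  shows "ELB T b D \<le> acc_attack T b D"
  unfolding ELB_def bound_acc_def acc_attack_def
proof (rule accuracy_antimono, clarify)
  fix x y
  assume "(x, y) \<in># D" and "attack_set T b (x, y)"
  then obtain x' where "x' \<in> attacker b x" "y * forest_pred T x' < 0" "y \<in> {-1, 1}"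
    using assms(2) unfolding attack_set_def by auto
  then show "real (length T) / 2 \<le> real (omega T x y) + real (S_ELB T b x y)"
    using successful_attack_reaches_ELB_threshold assms(1) by blast
qed

theorem mainTheorem4:
  fixes T :: "'d::finite dtree list" and b :: nat and D :: "((real^'d) \<times> int) multiset"
  assumes "\<forall>t\<in>set T. leaves_ok t"
    and "D \<noteq> {#}"
    and "\<forall>p\<in>#D. snd p \<in> {-1, 1}"
  shows "FLB T b D \<le> ELB T b D \<and> ELB T b D \<le> acc_attack T b D"
  using bound_acc_antimono[of S_ELB T b S_FLB D, OF S_ELB_le_S_FLB] ELB_le_acc_attack[OF assms(1,3)]
  unfolding FLB_def ELB_def by blast

end
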